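(* Let $\mathbf f=(f_1,\dots,f_n)\in\mathcal G_0^n$. (a) $\mathbf f^*\in\mathcal G_0^n$, $R[\mathbf f^*]$ is the reversed digraph $R[\mathbf f]^{-1}=\{(j,i):(i,j)\in R[\mathbf f]\}$, and $\mathbf f^*$ is generic (resp. strongly generic) if $\mathbf f$ is. (b) $\mathbf f\odot\mathbf f\in\mathcal G_0^n$, $R[\mathbf f\odot\mathbf f]=R[\mathbf f]$, and $\mathbf f\odot\mathbf f$ is generic (resp. strongly generic) if $\mathbf f$ is. (c) If $\mathbf g\in\mathcal G_{00}^n$, then $\mathbf g\odot\mathbf f\in\mathcal G_0^n$, $R[\mathbf g\odot\mathbf f]=R[\mathbf f]$, and $\mathbf g\odot\mathbf f$ is generic (resp. strongly generic) if $\mathbf f$ is. (d) If $h\in\mathcal G$, then $\rho_h\mathbf f\in\mathcal G^n$ and $R[\rho_h\mathbf f]=R[\mathbf f]$. (e) If $\pi$ is a permutation of $[n]$, then $\pi\mathbf f\in\mathcal G_0^n$, $R[\pi\mathbf f]=\pi R[\mathbf f]$, and $\pi\mathbf f$ is generic (resp. strongly generic) if $\mathbf f$ is.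
   Context: $\mathcal G$ is the group of strictly increasing continuous maps $f:[-1,1]\to[-1,1]$ with $f(\pm1)=\pm1$; $i$ the identity; $\mathcal G_0=\{f\in\mathcal G:\int_{-1}^1f=0\}$; $\mathcal G_{00}$ the odd elements of $\mathcal G$. $f^*(t)=-f(-t)$, $f^e(t)=\tfrac12(f(t)+f(-t))$, $Q(f,g)=\int_{-1}^1f(g^{-1}(t))\,dt$. For $f_1,f_2\in\mathcal G$, $f_1\odot f_2(t)=\tfrac12(f_1(2t+1)-1)$ for $t\in[-1,0]$ and $\tfrac12(f_2(2t-1)+1)$ for $t\in[0,1]$. For $\mathbf f,\mathbf g\in\mathcal G^n$, $h\in\mathcal G$, $\pi$ a permutation of $[n]$: $\mathbf f^*=(f_1^*,\dots,f_n^* )$, $\mathbf g\odot\mathbf f=(g_1\odot f_1,\dots,g_n\odot f_n)$, $\rho_h\mathbf f=(f_1\circ h,\dots,f_n\circ h)$, $\pi\mathbf f=(f_{\pi^{-1}1},\dots,f_{\pi^{-1}n})$. For a digraph $R$ on $[n]$, $\pi R=\{(\pi i,\pi j):(i,j)\in R\}$. $R[\mathbf f]$ is the digraph on $[n]$ with $(i,j)\in R[\mathbf f]$ iff $Q(f_j,f_i)>0$. $\mathbf f\in\mathcal G_0^n$ is generic if $\{i,f_1,\dots,f_n\}$ is linearly independent and $Q(f_i,f_j)\neq0$ for $i\neq j$; strongly generic if $\{f_1^e,\dots,f_n^e\}$ is linearly independent and $Q(f_i,f_j)\neq0$ for $i\ne j$. *)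

theory Defs
  imports "HOL-Analysis.Analysis" "HOL-Combinatorics.Permutations"
begin

text \<open>Functions on [-1,1] are represented as total functions real => real;
only their values on [-1,1] matter.  Vectors in G^n are maps nat => (real => real)
with relevant indices 0..n-1 (i.e. [n] is rendered as {..<n}).\<close>

definition Gset :: "(real \<Rightarrow> real) set" where
  "Gset = {f. continuous_on {-1..1} f \<and> strict_mono_on {-1..1} f
              \<and> f ` {-1..1} \<subseteq> {-1..1} \<and> f (-1) = -1 \<and> f 1 = 1}"

definition G0set :: "(real \<Rightarrow> real) set" where
  "G0set = {f \<in> Gset. integral {-1..1} f = 0}"

definition G00set :: "(real \<Rightarrow> real) set" where
  "G00set = {f \<in> Gset. \<forall>t\<in>{-1..1}. f (-t) = - f t}"

definition star :: "(real \<Rightarrow> real) \<Rightarrow> real \<Rightarrow> real" where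
  "star f = (\<lambda>t. - f (- t))"

definition evenpart :: "(real \<Rightarrow> real) \<Rightarrow> real \<Rightarrow> real" where
  "evenpart f = (\<lambda>t. (f t + f (- t)) / 2)"

definition Q :: "(real \<Rightarrow> real) \<Rightarrow> (real \<Rightarrow> real) \<Rightarrow> real" where
  "Q f g = integral {-1..1} (\<lambda>t. f (inv_into {-1..1} g t))"

definition odot :: "(real \<Rightarrow> real) \<Rightarrow> (real \<Rightarrow> real) \<Rightarrow> real \<Rightarrow> real" where
  "odot f1 f2 = (\<lambda>t. if t \<le> 0 then (f1 (2*t + 1) - 1) / 2 else (f2 (2*t - 1) + 1) / 2)"

definition vec_in :: "(real \<Rightarrow> real) set \<Rightarrow> nat \<Rightarrow> (nat \<Rightarrow> real \<Rightarrow> real) \<Rightarrow> bool" where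
  "vec_in A n fs \<longleftrightarrow> (\<forall>i<n. fs i \<in> A)"

definition vstar :: "(nat \<Rightarrow> real \<Rightarrow> real) \<Rightarrow> nat \<Rightarrow> real \<Rightarrow> real" where
  "vstar fs = (\<lambda>i. star (fs i))"

definition vodot :: "(nat \<Rightarrow> real \<Rightarrow> real) \<Rightarrow> (nat \<Rightarrow> real \<Rightarrow> real) \<Rightarrow> nat \<Rightarrow> real \<Rightarrow> real" where
  "vodot gs fs = (\<lambda>i. odot (gs i) (fs i))"

definition rho :: "(real \<Rightarrow> real) \<Rightarrow> (nat \<Rightarrow> real \<Rightarrow> real) \<Rightarrow> nat \<Rightarrow> real \<Rightarrow> real" where
  "rho h fs = (\<lambda>i. fs i \<circ> h)"

definition vperm :: "(nat \<Rightarrow> nat) \<Rightarrow> (nat \<Rightarrow> real \<Rightarrow> real) \<Rightarrow> nat \<Rightarrow> real \<Rightarrow> real" where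
  "vperm \<pi> fs = (\<lambda>i. fs (inv \<pi> i))"

definition perm_rel :: "(nat \<Rightarrow> nat) \<Rightarrow> (nat \<times> nat) set \<Rightarrow> (nat \<times> nat) set" where
  "perm_rel \<pi> R = {(\<pi> i, \<pi> j) | i j. (i, j) \<in> R}"

definition Rel :: "nat \<Rightarrow> (nat \<Rightarrow> real \<Rightarrow> real) \<Rightarrow> (nat \<times> nat) set" where
  "Rel n fs = {(i, j). i < n \<and> j < n \<and> Q (fs j) (fs i) > 0}"

definition lin_indep_on :: "nat \<Rightarrow> (nat \<Rightarrow> real \<Rightarrow> real) \<Rightarrow> bool" where
  "lin_indep_on m fs \<longleftrightarrow>
     (\<forall>c::nat \<Rightarrow> real. (\<forall>t\<in>{-1..1}. (\<Sum>k<m. c k * fs k t) = 0) \<longrightarrow> (\<forall>k<m. c k = 0))"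

definition generic :: "nat \<Rightarrow> (nat \<Rightarrow> real \<Rightarrow> real) \<Rightarrow> bool" where
  "generic n fs \<longleftrightarrow> vec_in G0set n fs
     \<and> lin_indep_on (Suc n) (\<lambda>k. if k = 0 then id else fs (k - 1))
     \<and> (\<forall>i<n. \<forall>j<n. i \<noteq> j \<longrightarrow> Q (fs i) (fs j) \<noteq> 0)"

definition strongly_generic :: "nat \<Rightarrow> (nat \<Rightarrow> real \<Rightarrow> real) \<Rightarrow> bool" where
  "strongly_generic n fs \<longleftrightarrow> vec_in G0set n fs
     \<and> lin_indep_on n (\<lambda>k. evenpart (fs k))
     \<and> (\<forall>i<n. \<forall>j<n. i \<noteq> j \<longrightarrow> Q (fs i) (fs j) \<noteq> 0)"

end

theory Submission
  imports Defs
begin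

text \<open>Under composition \<open>\<G>\<close> is a group, and \<open>Q f g\<close> is the integral of \<open>f \<circ> g\<inverse>\<close>. The heart of the
  matter is Young's identity \<open>\<integral>\<phi> + \<integral>\<phi>\<inverse> = 0\<close> for \<open>\<phi> \<in> \<G>\<close>, which makes \<open>Q\<close> antisymmetric.
  The operations then act on \<open>Q\<close> by explicit formulas: reflection \<open>f \<mapsto> f\<^sup>*\<close> negates it
  (reversing all arcs), \<open>f\<^sub>1 \<odot> f\<^sub>2\<close> averages the two halves with weight 1/4, odd functions have
  \<open>Q = 0\<close>, and a common right composition leaves it unchanged. Linear independence transfers
  because each operation is, on a suitable half interval, an affine change of variables.\<close>

abbreviation I :: "real set" where "I \<equiv> {-1..1}"

section \<open>The group \<open>\<G>\<close>\<close>

lemma GsetD: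
  assumes "f \<in> Gset"
  shows "continuous_on I f" "strict_mono_on I f" "x \<in> I \<Longrightarrow> f x \<in> I" "f (-1) = -1" "f 1 = 1"
  using assms unfolding Gset_def by blast+

lemma GsetI:
  assumes "continuous_on I f" "strict_mono_on I f" "\<And>x. x \<in> I \<Longrightarrow> f x \<in> I"
    and "f (-1) = -1" "f 1 = 1"
  shows "f \<in> Gset"
  using assms unfolding Gset_def by auto

lemma Gset_le_iff: "f \<in> Gset \<Longrightarrow> x \<in> I \<Longrightarrow> y \<in> I \<Longrightarrow> f x \<le> f y \<longleftrightarrow> x \<le> y"
  using strict_mono_on_less_eq GsetD(2) by blast

lemma Gset_less_iff: "f \<in> Gset \<Longrightarrow> x \<in> I \<Longrightarrow> y \<in> I \<Longrightarrow> f x < f y \<longleftrightarrow> x < y"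
  using strict_mono_on_less GsetD(2) by blast

lemma Gset_image: assumes "f \<in> Gset" shows "f ` I = I"
proof
  show "f ` I \<subseteq> I" using GsetD(3)[OF assms] by auto
  show "I \<subseteq> f ` I"
  proof
    fix y assume "y \<in> I"
    have "\<exists>x. -1 \<le> x \<and> x \<le> 1 \<and> f x = y"
      by (rule IVT') (use \<open>y \<in> I\<close> GsetD[OF assms] in auto)
    then show "y \<in> f ` I" by auto
  qed
qed

lemma Gset_inv_into:
  assumes "f \<in> Gset" "t \<in> I"
  shows "inv_into I f t \<in> I" "f (inv_into I f t) = t"
proof -
  have "t \<in> f ` I" using assms Gset_image by simp
  then show "inv_into I f t \<in> I" "f (inv_into I f t) = t" by (rule inv_into_into, rule f_inv_into_f)
qed

lemma Gset_inv_into_unique: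
  assumes "f \<in> Gset" "x \<in> I" "f x = t"
  shows "inv_into I f t = x"
  using inv_into_f_f[OF strict_mono_on_imp_inj_on[OF GsetD(2)[OF assms(1)]] assms(2)] assms(3) by simp

lemma inv_into_Gset: assumes f: "f \<in> Gset" shows "inv_into I f \<in> Gset"
proof (rule GsetI)
  have "continuous_on (f ` I) (inv_into I f)"
    by (rule continuous_on_inv) (use GsetD(1)[OF f] Gset_inv_into_unique[OF f _ refl] in auto)
  then show "continuous_on I (inv_into I f)" unfolding Gset_image[OF f] .
  show "strict_mono_on I (inv_into I f)"
  proof (rule strict_mono_onI)
    fix s t assume "s \<in> I" "t \<in> I" "s < t"
    then show "inv_into I f s < inv_into I f t"
      using Gset_less_iff[OF f, of "inv_into I f s" "inv_into I f t"] Gset_inv_into[OF f] by simp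
  qed
  show "inv_into I f (-1) = -1" "inv_into I f 1 = 1"
    by (rule Gset_inv_into_unique[OF f]; simp add: GsetD(4,5)[OF f])+
qed (rule Gset_inv_into[OF f])

lemma comp_Gset: assumes "f \<in> Gset" "g \<in> Gset" shows "f \<circ> g \<in> Gset"
proof (rule GsetI)
  show "continuous_on I (f \<circ> g)"
    using continuous_on_compose[OF GsetD(1)[OF assms(2)]] GsetD(1)[OF assms(1)] Gset_image[OF assms(2)]
    by simp
  show "strict_mono_on I (f \<circ> g)"
  proof (rule strict_mono_onI)
    fix s t assume "s \<in> I" "t \<in> I" "s < t"
    then show "(f \<circ> g) s < (f \<circ> g) t"
      using Gset_less_iff[OF assms(2), of s t] Gset_less_iff[OF assms(1), of "g s" "g t"] GsetD(3)[OF assms(2)]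
      by simp
  qed
  show "(f \<circ> g) x \<in> I" if "x \<in> I" for x
    using GsetD(3)[OF assms(1) GsetD(3)[OF assms(2) that]] by simp
qed (simp_all add: GsetD(4,5) assms)

lemma star_Gset: assumes f: "f \<in> Gset" shows "star f \<in> Gset"
proof (rule GsetI)
  show "continuous_on I (star f)"
    unfolding star_def
    by (intro continuous_intros continuous_on_compose2[OF GsetD(1)[OF f]]) auto
  show "strict_mono_on I (star f)"
  proof (rule strict_mono_onI)
    fix s t assume "s \<in> I" "t \<in> I" "s < t"
    then show "star f s < star f t" using Gset_less_iff[OF f, of "-t" "-s"] by (simp add: star_def)
  qed
  show "star f x \<in> I" if "x \<in> I" for x
    using GsetD(3)[OF f, of "- x"] that by (auto simp: star_def)
qed (simp_all add: star_def GsetD(4,5)[OF f])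

lemma odot_eq_right: "a 1 = 1 \<Longrightarrow> b (-1) = -1 \<Longrightarrow> 0 \<le> t \<Longrightarrow> odot a b t = (b (2 * t - 1) + 1) / 2"
  by (cases "t = 0") (auto simp: odot_def)

lemma odot_Gset: assumes a: "a \<in> Gset" and b: "b \<in> Gset" shows "odot a b \<in> Gset"
proof (rule GsetI)
  have "continuous_on {-1..0} (\<lambda>t. (a (2 * t + 1) - 1) / 2)"
    by (intro continuous_intros continuous_on_compose2[OF GsetD(1)[OF a]]) auto
  then have "continuous_on {-1..0} (odot a b)"
    by (rule continuous_on_eq) (auto simp: odot_def)
  moreover have "continuous_on {0..1} (\<lambda>t. (b (2 * t - 1) + 1) / 2)"
    by (intro continuous_intros continuous_on_compose2[OF GsetD(1)[OF b]]) auto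
  then have "continuous_on {0..1} (odot a b)"
    by (rule continuous_on_eq) (use odot_eq_right GsetD a b in auto)
  ultimately have "continuous_on ({-1..0} \<union> {0..1}) (odot a b)"
    by (intro continuous_on_closed_Un) auto
  moreover have "{-1..0} \<union> {0..1} = I" by auto
  ultimately show "continuous_on I (odot a b)" by simp
  show "strict_mono_on I (odot a b)"
  proof (rule strict_mono_onI)
    fix s t assume st: "s \<in> I" "t \<in> I" "s < t"
    consider "t \<le> 0" | "s \<le> 0" "0 < t" | "0 < s" using st by linarith
    then show "odot a b s < odot a b t"
    proof cases
      case 1
      then show ?thesis using st Gset_less_iff[OF a, of "2 * s + 1" "2 * t + 1"] by (simp add: odot_def)
    next
      case 2
      then have "a (2 * s + 1) \<le> 1" "-1 < b (2 * t - 1)"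
        using st GsetD(3)[OF a, of "2 * s + 1"] Gset_less_iff[OF b, of "-1" "2 * t - 1"] GsetD(4)[OF b]
        by auto
      then show ?thesis using 2 by (simp add: odot_def)
    next
      case 3
      then show ?thesis using st Gset_less_iff[OF b, of "2 * s - 1" "2 * t - 1"] by (simp add: odot_def)
    qed
  qed
  show "odot a b x \<in> I" if "x \<in> I" for x
    using that GsetD(3)[OF a, of "2 * x + 1"] GsetD(3)[OF b, of "2 * x - 1"] by (auto simp: odot_def)
qed (simp_all add: odot_def GsetD(4,5) a b)

lemma inv_into_comp:
  assumes "a \<in> Gset" "h \<in> Gset" "t \<in> I"
  shows "inv_into I (a \<circ> h) t = inv_into I h (inv_into I a t)"
proof (rule Gset_inv_into_unique[OF comp_Gset[OF assms(1,2)]])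
  show "inv_into I h (inv_into I a t) \<in> I" using Gset_inv_into(1)[OF assms(2) Gset_inv_into(1)[OF assms(1,3)]] .
  show "(a \<circ> h) (inv_into I h (inv_into I a t)) = t"
    using Gset_inv_into(2)[OF assms(2) Gset_inv_into(1)[OF assms(1,3)]] Gset_inv_into(2)[OF assms(1,3)] by simp
qed

lemma inv_into_inv_into: "g \<in> Gset \<Longrightarrow> t \<in> I \<Longrightarrow> inv_into I (inv_into I g) t = g t"
  by (rule Gset_inv_into_unique[OF inv_into_Gset]) (use GsetD(3) Gset_inv_into_unique in auto)

lemma inv_into_star:
  assumes "a \<in> Gset" "t \<in> I"
  shows "inv_into I (star a) t = star (inv_into I a) t"
  by (rule Gset_inv_into_unique[OF star_Gset])
    (use assms Gset_inv_into[of a "-t"] in \<open>auto simp: star_def\<close>)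

lemma odot_odot:
  assumes "c \<in> Gset" "d \<in> Gset" "t \<in> I"
  shows "odot a b (odot c d t) = odot (a \<circ> c) (b \<circ> d) t"
proof (cases "t \<le> 0")
  case True
  moreover have "c (2 * t + 1) \<le> 1" using GsetD(3)[OF assms(1), of "2 * t + 1"] assms True by auto
  moreover have "2 * ((c (2 * t + 1) - 1) / 2) + 1 = c (2 * t + 1)" by (simp add: field_simps)
  ultimately show ?thesis by (simp add: odot_def)
next
  case False
  moreover have "-1 < d (2 * t - 1)"
    using Gset_less_iff[OF assms(2), of "-1" "2 * t - 1"] GsetD(4)[OF assms(2)] assms False by auto
  moreover have "2 * ((d (2 * t - 1) + 1) / 2) - 1 = d (2 * t - 1)" by (simp add: field_simps)
  ultimately show ?thesis by (simp add: odot_def)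
qed

lemma inv_into_odot:
  assumes a: "a \<in> Gset" and b: "b \<in> Gset" and t: "t \<in> I"
  shows "inv_into I (odot a b) t = odot (inv_into I a) (inv_into I b) t"
proof (rule Gset_inv_into_unique[OF odot_Gset[OF a b]])
  show "odot (inv_into I a) (inv_into I b) t \<in> I"
    using GsetD(3)[OF odot_Gset[OF inv_into_Gset[OF a] inv_into_Gset[OF b]] t] .
  have "odot a b (odot (inv_into I a) (inv_into I b) t) = odot (a \<circ> inv_into I a) (b \<circ> inv_into I b) t"
    by (rule odot_odot[OF inv_into_Gset[OF a] inv_into_Gset[OF b] t])
  also have "\<dots> = t"
    using t Gset_inv_into(2)[OF a, of "2 * t + 1"] Gset_inv_into(2)[OF b, of "2 * t - 1"]
    by (auto simp: odot_def)
  finally show "odot a b (odot (inv_into I a) (inv_into I b) t) = t" .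
qed

lemma inv_into_odd:
  assumes "g \<in> G00set" "t \<in> I"
  shows "inv_into I g (-t) = - inv_into I g t"
  by (rule Gset_inv_into_unique) (use assms Gset_inv_into[of g t] in \<open>auto simp: G00set_def\<close>)

section \<open>Young's identity\<close>

lemma integral_between_bounds:
  fixes f :: "real \<Rightarrow> real"
  assumes "f integrable_on {a..b}" "a \<le> b" "\<And>x. x \<in> {a..b} \<Longrightarrow> l \<le> f x \<and> f x \<le> u"
  shows "(b - a) * l \<le> integral {a..b} f \<and> integral {a..b} f \<le> (b - a) * u"
proof -
  have "integral {a..b} (\<lambda>x. l) \<le> integral {a..b} f" "integral {a..b} f \<le> integral {a..b} (\<lambda>x. u)"
    by (intro integral_le; use assms in auto)+
  then show ?thesis using assms(2) by (simp add: mult.commute)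
qed

lemma Gset_integrable: "f \<in> Gset \<Longrightarrow> {a..b} \<subseteq> I \<Longrightarrow> f integrable_on {a..b}"
  by (meson GsetD(1) continuous_on_subset integrable_continuous_real)

definition young_defect :: "(real \<Rightarrow> real) \<Rightarrow> real \<Rightarrow> real" where
  "young_defect \<phi> x = integral {-1..x} \<phi> + integral {-1..\<phi> x} (inv_into I \<phi>) - x * \<phi> x"

text \<open>The two integrals over \<open>[x,y]\<close> and \<open>[\<phi> x, \<phi> y]\<close> are squeezed between the areas of the
  rectangles that make up \<open>y \<phi> y - x \<phi> x\<close>.\<close>
lemma young_defect_increment:
  assumes \<phi>: "\<phi> \<in> Gset" and xy: "x \<in> I" "y \<in> I" "x \<le> y"
  shows "\<bar>young_defect \<phi> y - young_defect \<phi> x\<bar> \<le> (y - x) * (\<phi> y - \<phi> x)"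
proof -
  define \<psi> where "\<psi> = inv_into I \<phi>"
  have \<psi>: "\<psi> \<in> Gset" unfolding \<psi>_def using inv_into_Gset[OF \<phi>] .
  have \<phi>xy: "\<phi> x \<in> I" "\<phi> y \<in> I" "\<phi> x \<le> \<phi> y" using GsetD(3)[OF \<phi>] Gset_le_iff[OF \<phi>] xy by auto
  have "integral {-1..x} \<phi> + integral {x..y} \<phi> = integral {-1..y} \<phi>"
    by (rule Henstock_Kurzweil_Integration.integral_combine) (use xy Gset_integrable[OF \<phi>] in auto)
  moreover have "integral {-1..\<phi> x} \<psi> + integral {\<phi> x..\<phi> y} \<psi> = integral {-1..\<phi> y} \<psi>"
    by (rule Henstock_Kurzweil_Integration.integral_combine) (use \<phi>xy Gset_integrable[OF \<psi>] in auto)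
  ultimately have increment: "young_defect \<phi> y - young_defect \<phi> x
      = integral {x..y} \<phi> + integral {\<phi> x..\<phi> y} \<psi> - y * \<phi> y + x * \<phi> x"
    unfolding young_defect_def \<psi>_def by (simp add: algebra_simps)
  have "(y - x) * \<phi> x \<le> integral {x..y} \<phi> \<and> integral {x..y} \<phi> \<le> (y - x) * \<phi> y"
    by (rule integral_between_bounds) (use xy Gset_integrable[OF \<phi>] Gset_le_iff[OF \<phi>] in auto)
  moreover have "(\<phi> y - \<phi> x) * x \<le> integral {\<phi> x..\<phi> y} \<psi> \<and> integral {\<phi> x..\<phi> y} \<psi> \<le> (\<phi> y - \<phi> x) * y"
  proof (rule integral_between_bounds)
    show "\<psi> integrable_on {\<phi> x..\<phi> y}" using Gset_integrable[OF \<psi>] \<phi>xy by auto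
    fix s assume s: "s \<in> {\<phi> x..\<phi> y}"
    then have "\<psi> (\<phi> x) \<le> \<psi> s" "\<psi> s \<le> \<psi> (\<phi> y)" using Gset_le_iff[OF \<psi>] \<phi>xy by auto
    moreover have "\<psi> (\<phi> x) = x" "\<psi> (\<phi> y) = y"
      unfolding \<psi>_def using Gset_inv_into_unique[OF \<phi>] xy by auto
    ultimately show "x \<le> \<psi> s \<and> \<psi> s \<le> y" by auto
  qed (use \<phi>xy in auto)
  ultimately show ?thesis unfolding increment abs_le_iff by (simp add: algebra_simps)
qed

lemma young_defect_constant:
  assumes \<phi>: "\<phi> \<in> Gset"
  shows "young_defect \<phi> 1 = young_defect \<phi> (-1)"
proof -
  have "\<bar>young_defect \<phi> y - young_defect \<phi> x\<bar> \<le> \<bar>y - x\<bar> * \<bar>\<phi> y - \<phi> x\<bar>"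
    if "x \<in> I" "y \<in> I" for x y
    using young_defect_increment[OF \<phi>, of x y] young_defect_increment[OF \<phi>, of y x]
      Gset_le_iff[OF \<phi>, of x y] Gset_le_iff[OF \<phi>, of y x] that
    by (cases "x \<le> y") (auto simp: abs_mult abs_minus_commute)
  then have quotient: "\<forall>\<^sub>F y in at x within I.
      norm ((young_defect \<phi> y - young_defect \<phi> x) / (y - x)) \<le> \<bar>\<phi> y - \<phi> x\<bar>" if "x \<in> I" for x
    using that unfolding eventually_at_filter
    by (intro always_eventually) (auto simp: divide_le_eq abs_divide mult.commute)
  have "(young_defect \<phi> has_derivative (\<lambda>h. 0)) (at x within I)" if x: "x \<in> I" for x
  proof -
    have "((\<lambda>y. \<phi> y - \<phi> x) \<longlongrightarrow> 0) (at x within I)"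
      using GsetD(1)[OF \<phi>] x LIM_zero continuous_on_def by blast
    then have "((\<lambda>y. (young_defect \<phi> y - young_defect \<phi> x) / (y - x)) \<longlongrightarrow> 0) (at x within I)"
      by (intro Lim_null_comparison[OF quotient[OF x]] tendsto_rabs_zero)
    then have "(young_defect \<phi> has_field_derivative 0) (at x within I)"
      by (simp add: has_field_derivative_iff)
    moreover have "(*) 0 = (\<lambda>h::real. 0::real)" by auto
    ultimately show ?thesis by (simp add: has_field_derivative_def)
  qed
  then obtain c where "\<forall>x\<in>I. young_defect \<phi> x = c"
    using has_derivative_zero_constant[of I "young_defect \<phi>"] by auto
  then show ?thesis by auto
qed

lemma integral_inv_into:
  assumes "\<phi> \<in> Gset"
  shows "integral I \<phi> + integral I (inv_into I \<phi>) = 0"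
  using young_defect_constant[OF assms] GsetD(4,5)[OF assms] by (simp add: young_defect_def)

lemma integral_odd:
  fixes \<phi> :: "real \<Rightarrow> real"
  assumes "\<And>t. t \<in> I \<Longrightarrow> \<phi> (-t) = - \<phi> t"
  shows "integral I \<phi> = 0"
proof -
  have "integral I \<phi> = integral I (\<lambda>t. \<phi> (-t))"
    using Henstock_Kurzweil_Integration.integral_reflect_real[of 1 "-1" \<phi>] by simp
  also have "\<dots> = - integral I \<phi>" by (subst integral_cong[OF assms]) auto
  finally show ?thesis by simp
qed

lemma integral_star: "integral I (star f) = - integral I f"
  using Henstock_Kurzweil_Integration.integral_reflect_real[of 1 "-1" f] by (simp add: star_def)

lemma integral_affine_halves:
  fixes \<psi> :: "real \<Rightarrow> real"
  shows "integral {-1..0} (\<lambda>t. \<psi> (2 * t + 1)) = integral I \<psi> / 2"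
    and "integral {0..1} (\<lambda>t. \<psi> (2 * t - 1)) = integral I \<psi> / 2"
  using integral_stretch_real[of 2 "-2" 0 "\<lambda>x. \<psi> (x + 1)"] integral_shift_real_ivl[of "-1" 1 1 \<psi>]
    integral_stretch_real[of 2 0 2 "\<lambda>x. \<psi> (x - 1)"] integral_shift_real_ivl[of "-1" "-1" 1 \<psi>]
  by (simp_all add: algebra_simps)

lemma integral_odot:
  assumes a: "a \<in> Gset" and b: "b \<in> Gset"
  shows "integral I (odot a b) = (integral I a + integral I b) / 4"
proof -
  have ia: "(\<lambda>t. a (2 * t + 1)) integrable_on {-1..0}"
    by (intro integrable_continuous_real continuous_on_compose2[OF GsetD(1)[OF a]] continuous_intros)
      auto
  have ib: "(\<lambda>t. b (2 * t - 1)) integrable_on {0..1}"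
    by (intro integrable_continuous_real continuous_on_compose2[OF GsetD(1)[OF b]] continuous_intros)
      auto
  have "integral I (odot a b) = integral {-1..0} (odot a b) + integral {0..1} (odot a b)"
    by (rule Henstock_Kurzweil_Integration.integral_combine[symmetric])
      (use Gset_integrable[OF odot_Gset[OF a b]] in auto)
  also have "integral {-1..0} (odot a b) = integral {-1..0} (\<lambda>t. a (2 * t + 1) / 2 - 1/2)"
    by (rule integral_cong) (auto simp: odot_def diff_divide_distrib)
  also have "\<dots> = integral {-1..0} (\<lambda>t. a (2 * t + 1)) / 2 - 1/2"
    by (subst integral_diff) (use ia in \<open>auto simp: content_real\<close>)
  also have "integral {0..1} (odot a b) = integral {0..1} (\<lambda>t. b (2 * t - 1) / 2 + 1/2)"
    by (rule integral_cong) (use odot_eq_right GsetD a b in \<open>auto simp: add_divide_distrib\<close>)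
  also have "\<dots> = integral {0..1} (\<lambda>t. b (2 * t - 1)) / 2 + 1/2"
    by (subst integral_add) (use ib in \<open>auto simp: content_real\<close>)
  finally show ?thesis by (simp add: integral_affine_halves)
qed

lemma Q_swap: assumes f: "f \<in> Gset" and g: "g \<in> Gset" shows "Q g f = - Q f g"
proof -
  have \<phi>: "f \<circ> inv_into I g \<in> Gset" by (rule comp_Gset[OF f inv_into_Gset[OF g]])
  have "integral I (inv_into I (f \<circ> inv_into I g)) = Q g f"
    unfolding Q_def
    by (rule integral_cong)
      (use inv_into_comp[OF f inv_into_Gset[OF g]] inv_into_inv_into[OF g] Gset_inv_into[OF f] in auto)
  moreover have "integral I (f \<circ> inv_into I g) = Q f g" by (simp add: Q_def o_def)
  ultimately show ?thesis using integral_inv_into[OF \<phi>] by simp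
qed

lemma Q_star: assumes "b \<in> Gset" shows "Q (star a) (star b) = - Q a b"
proof -
  have "Q (star a) (star b) = integral I (\<lambda>t. - a (inv_into I b (-t)))"
    unfolding Q_def by (rule integral_cong) (use inv_into_star[OF assms] in \<open>auto simp: star_def\<close>)
  then show ?thesis
    using Henstock_Kurzweil_Integration.integral_reflect_real[of 1 "-1" "\<lambda>t. a (inv_into I b t)"] by (simp add: Q_def)
qed

lemma Q_odot:
  assumes "g1 \<in> Gset" "f1 \<in> Gset" "g2 \<in> Gset" "f2 \<in> Gset"
  shows "Q (odot g1 f1) (odot g2 f2) = (Q g1 g2 + Q f1 f2) / 4"
proof -
  have "Q (odot g1 f1) (odot g2 f2) = integral I (odot (g1 \<circ> inv_into I g2) (f1 \<circ> inv_into I f2))"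
    unfolding Q_def by (rule integral_cong) (use assms inv_into_odot odot_odot inv_into_Gset in auto)
  also have "\<dots> = (Q g1 g2 + Q f1 f2) / 4"
    using integral_odot assms comp_Gset inv_into_Gset by (simp add: Q_def o_def)
  finally show ?thesis .
qed

lemma Q_comp_right:
  assumes "b \<in> Gset" "h \<in> Gset"
  shows "Q (a \<circ> h) (b \<circ> h) = Q a b"
  unfolding Q_def
  by (rule integral_cong) (use inv_into_comp[OF assms] Gset_inv_into[OF assms(2) Gset_inv_into(1)[OF assms(1)]] in auto)

lemma Q_odd: assumes "g1 \<in> G00set" "g2 \<in> G00set" shows "Q g1 g2 = 0"
  unfolding Q_def
  by (rule integral_odd) (use assms inv_into_odd Gset_inv_into in \<open>auto simp: G00set_def\<close>)

section \<open>Linear independence\<close>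

lemma lin_indep_on_transfer:
  assumes "lin_indep_on m f"
    and "\<And>c. \<forall>t\<in>I. (\<Sum>k<m. c k * g k t) = 0 \<Longrightarrow> \<forall>t\<in>I. (\<Sum>k<m. c k * f k t) = 0"
  shows "lin_indep_on m g"
  using assms unfolding lin_indep_on_def by blast

lemma lin_indep_on_scale:
  assumes "lin_indep_on m f" "a \<noteq> 0"
  shows "lin_indep_on m (\<lambda>k t. a * f k t)"
  using assms(1)
proof (rule lin_indep_on_transfer)
  fix c assume "\<forall>t\<in>I. (\<Sum>k<m. c k * (a * f k t)) = 0"
  then show "\<forall>t\<in>I. (\<Sum>k<m. c k * f k t) = 0"
    using assms(2) by (simp add: sum_distrib_left[symmetric] algebra_simps)
qed

lemma lin_indep_on_star:
  assumes "lin_indep_on m f"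
  shows "lin_indep_on m (\<lambda>k. star (f k))"
  using assms
proof (rule lin_indep_on_transfer)
  fix c assume vanish: "\<forall>t\<in>I. (\<Sum>k<m. c k * star (f k) t) = 0"
  show "\<forall>t\<in>I. (\<Sum>k<m. c k * f k t) = 0"
  proof
    fix t :: real assume "t \<in> I"
    then have "(\<Sum>k<m. c k * star (f k) (-t)) = 0" using vanish by auto
    then show "(\<Sum>k<m. c k * f k t) = 0" by (simp add: star_def sum_negf)
  qed
qed

lemma lin_indep_on_permute:
  assumes li: "lin_indep_on m f" and \<sigma>: "\<sigma> permutes {..<m}"
  shows "lin_indep_on m (f \<circ> \<sigma>)"
  unfolding lin_indep_on_def
proof (rule allI, rule impI)
  fix c assume vanish: "\<forall>t\<in>I. (\<Sum>k<m. c k * (f \<circ> \<sigma>) k t) = 0"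
  have "(\<Sum>k<m. c (inv \<sigma> k) * f k t) = (\<Sum>k<m. c k * (f \<circ> \<sigma>) k t)" for t
    using sum.permute[OF \<sigma>, of "\<lambda>k. c (inv \<sigma> k) * f k t"] permutes_inverses(2)[OF \<sigma>] by simp
  then have "\<forall>k<m. c (inv \<sigma> k) = 0"
    using li[unfolded lin_indep_on_def, rule_format, of "\<lambda>k. c (inv \<sigma> k)"] vanish by simp
  then show "\<forall>k<m. c k = 0"
    by (metis permutes_inverses(2)[OF \<sigma>] permutes_in_image[OF \<sigma>] lessThan_iff)
qed

lemma odot_at_right_half: "-1 < s \<Longrightarrow> odot a b ((s + 1) / 2) = (b s + 1) / 2"
  by (simp add: odot_def field_simps)

lemma evenpart_odot_at_right_half:
  "-1 < s \<Longrightarrow> evenpart (odot a b) ((s + 1) / 2) = (b s + a (-s)) / 4"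
  by (simp add: evenpart_def odot_def field_simps)

lemma right_half_in_I: "s \<in> I \<Longrightarrow> (s + 1) / 2 \<in> I"
  by auto

text \<open>On \<open>[0,1]\<close> every \<open>g k \<odot> f k\<close> is the same affine image of \<open>f k\<close>, so a vanishing combination
  \<open>\<Sum> c\<^sub>k (g\<^sub>k \<odot> f\<^sub>k)\<close> gives \<open>\<Sum> c\<^sub>k f\<^sub>k = -\<Sum> c\<^sub>k\<close> on \<open>(-1,1]\<close>; evaluation at the endpoints
  shows that \<open>\<Sum> c\<^sub>k = 0\<close>.\<close>
lemma lin_indep_on_odot:
  assumes li: "lin_indep_on m f" and G: "\<And>k. k < m \<Longrightarrow> f k \<in> Gset"
  shows "lin_indep_on m (\<lambda>k. odot (g k) (f k))"
  using li
proof (rule lin_indep_on_transfer)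
  fix c assume vanish: "\<forall>t\<in>I. (\<Sum>k<m. c k * odot (g k) (f k) t) = 0"
  define C where "C = (\<Sum>k<m. c k)"
  have right: "(\<Sum>k<m. c k * f k s) = - C" if "s \<in> I" "-1 < s" for s
  proof -
    have "0 = (\<Sum>k<m. c k * odot (g k) (f k) ((s + 1) / 2))"
      using vanish right_half_in_I[OF \<open>s \<in> I\<close>] by simp
    also have "\<dots> = ((\<Sum>k<m. c k * f k s) + C) / 2"
      unfolding odot_at_right_half[OF \<open>-1 < s\<close>] C_def
      by (simp add: sum_divide_distrib[symmetric] sum.distrib algebra_simps)
    finally show ?thesis by simp
  qed
  have at_one: "(\<Sum>k<m. c k * f k 1) = C" and at_minus_one: "(\<Sum>k<m. c k * f k (-1)) = - C"
    unfolding C_def using GsetD(4,5)[OF G] by (simp_all add: sum_negf)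
  then have "C = 0" using right[of 1] by simp
  show "\<forall>s\<in>I. (\<Sum>k<m. c k * f k s) = 0"
  proof
    fix s :: real assume "s \<in> I"
    then consider "s = -1" | "-1 < s" by fastforce
    then show "(\<Sum>k<m. c k * f k s) = 0"
      by cases (use right[OF \<open>s \<in> I\<close>] at_minus_one \<open>C = 0\<close> in simp_all)
  qed
qed

lemma evenpart_Gset_endpoints: "f \<in> Gset \<Longrightarrow> s = -1 \<or> s = 1 \<Longrightarrow> evenpart f s = 0"
  by (auto simp: evenpart_def GsetD(4,5))

lemma lin_indep_on_evenpart_odot_self:
  assumes li: "lin_indep_on m (\<lambda>k. evenpart (f k))" and G: "\<And>k. k < m \<Longrightarrow> f k \<in> Gset"
  shows "lin_indep_on m (\<lambda>k. evenpart (odot (f k) (f k)))"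
  using li
proof (rule lin_indep_on_transfer)
  fix c assume vanish: "\<forall>t\<in>I. (\<Sum>k<m. c k * evenpart (odot (f k) (f k)) t) = 0"
  show "\<forall>s\<in>I. (\<Sum>k<m. c k * evenpart (f k) s) = 0"
  proof
    fix s :: real assume s: "s \<in> I"
    show "(\<Sum>k<m. c k * evenpart (f k) s) = 0"
    proof (cases "s = -1")
      case True
      then show ?thesis using evenpart_Gset_endpoints G by simp
    next
      case False
      with s have "-1 < s" by simp
      have "0 = (\<Sum>k<m. c k * evenpart (odot (f k) (f k)) ((s + 1) / 2))"
        using vanish right_half_in_I[OF s] by simp
      also have "\<dots> = (\<Sum>k<m. c k * evenpart (f k) s) / 2"
        unfolding evenpart_odot_at_right_half[OF \<open>-1 < s\<close>]
        by (simp add: evenpart_def sum_divide_distrib)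
      finally show ?thesis by simp
    qed
  qed
qed

text \<open>For odd \<open>g\<close> the even part of \<open>g \<odot> f\<close> on \<open>[0,1]\<close> is an affine image of \<open>f - g\<close>, whose
  even part is that of \<open>f\<close>.\<close>
lemma lin_indep_on_evenpart_odot_odd:
  assumes li: "lin_indep_on m (\<lambda>k. evenpart (f k))" and G: "\<And>k. k < m \<Longrightarrow> f k \<in> Gset"
    and odd: "\<And>k. k < m \<Longrightarrow> g k \<in> G00set"
  shows "lin_indep_on m (\<lambda>k. evenpart (odot (g k) (f k)))"
  using li
proof (rule lin_indep_on_transfer)
  fix c assume vanish: "\<forall>t\<in>I. (\<Sum>k<m. c k * evenpart (odot (g k) (f k)) t) = 0"
  have g_odd: "g k (-s) = - g k s" if "k < m" "s \<in> I" for k s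
    using odd that by (auto simp: G00set_def)
  have diff: "(\<Sum>k<m. c k * (f k s - g k s)) = 0" if s: "s \<in> I" "-1 < s" for s
  proof -
    have "0 = (\<Sum>k<m. c k * evenpart (odot (g k) (f k)) ((s + 1) / 2))"
      using vanish right_half_in_I[OF s(1)] by simp
    also have "\<dots> = (\<Sum>k<m. c k * (f k s - g k s)) / 4"
      unfolding evenpart_odot_at_right_half[OF s(2)] sum_divide_distrib
      by (rule sum.cong) (use g_odd s in auto)
    finally show ?thesis by simp
  qed
  show "\<forall>s\<in>I. (\<Sum>k<m. c k * evenpart (f k) s) = 0"
  proof
    fix s :: real assume s: "s \<in> I"
    show "(\<Sum>k<m. c k * evenpart (f k) s) = 0"
    proof (cases "s = -1 \<or> s = 1")
      case True
      then show ?thesis using evenpart_Gset_endpoints G by simp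
    next
      case False
      have "(\<Sum>k<m. c k * evenpart (f k) s)
          = ((\<Sum>k<m. c k * (f k s - g k s)) + (\<Sum>k<m. c k * (f k (-s) - g k (-s)))) / 2"
        using g_odd s
        by (simp add: evenpart_def sum.distrib[symmetric] sum_divide_distrib algebra_simps)
      then show ?thesis using diff[of s] diff[of "-s"] s False by simp
    qed
  qed
qed

definition id_cons :: "(nat \<Rightarrow> real \<Rightarrow> real) \<Rightarrow> nat \<Rightarrow> real \<Rightarrow> real" where
  "id_cons f = (\<lambda>k. if k = 0 then id else f (k - 1))"

definition pairwise_Q_nonzero :: "nat \<Rightarrow> (nat \<Rightarrow> real \<Rightarrow> real) \<Rightarrow> bool" where
  "pairwise_Q_nonzero n f \<longleftrightarrow> (\<forall>i<n. \<forall>j<n. i \<noteq> j \<longrightarrow> Q (f i) (f j) \<noteq> 0)"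

lemma generic_iff:
  "generic n f \<longleftrightarrow> vec_in G0set n f \<and> lin_indep_on (Suc n) (id_cons f) \<and> pairwise_Q_nonzero n f"
  unfolding generic_def id_cons_def pairwise_Q_nonzero_def ..

lemma strongly_generic_iff:
  "strongly_generic n f \<longleftrightarrow>
     vec_in G0set n f \<and> lin_indep_on n (\<lambda>k. evenpart (f k)) \<and> pairwise_Q_nonzero n f"
  unfolding strongly_generic_def pairwise_Q_nonzero_def ..

lemma pairwise_Q_nonzero_scaled:
  assumes "pairwise_Q_nonzero n f" "c \<noteq> 0"
    and "\<And>i j. i < n \<Longrightarrow> j < n \<Longrightarrow> Q (g i) (g j) = c * Q (f i) (f j)"
  shows "pairwise_Q_nonzero n g"
  using assms unfolding pairwise_Q_nonzero_def by simp

lemma Rel_scaled: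
  assumes "0 < c" "\<And>i j. i < n \<Longrightarrow> j < n \<Longrightarrow> Q (g i) (g j) = c * Q (f i) (f j)"
  shows "Rel n g = Rel n f"
  using assms unfolding Rel_def by (auto simp: zero_less_mult_iff)

lemma vec_in_Gset: "vec_in G0set n f \<Longrightarrow> i < n \<Longrightarrow> f i \<in> Gset"
  by (simp add: vec_in_def G0set_def)

lemma vec_in_integral: "vec_in G0set n f \<Longrightarrow> i < n \<Longrightarrow> integral I (f i) = 0"
  by (simp add: vec_in_def G0set_def)

lemma id_Gset: "id \<in> Gset"
  by (rule GsetI) (auto simp: strict_mono_on_id)

lemma id_cons_Gset: "vec_in G0set n f \<Longrightarrow> k < Suc n \<Longrightarrow> id_cons f k \<in> Gset"
  by (simp add: id_cons_def vec_in_Gset id_Gset)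

lemma vstar_G0set: "vec_in G0set n f \<Longrightarrow> vec_in G0set n (vstar f)"
  by (simp add: vec_in_def G0set_def vstar_def star_Gset integral_star)

lemma Q_vstar: "vec_in G0set n f \<Longrightarrow> j < n \<Longrightarrow> Q (vstar f i) (vstar f j) = -1 * Q (f i) (f j)"
  by (simp add: vstar_def Q_star vec_in_Gset)

lemma Rel_vstar:
  assumes f: "vec_in G0set n f"
  shows "Rel n (vstar f) = (Rel n f)\<inverse>"
proof -
  have "Q (vstar f j) (vstar f i) = Q (f i) (f j)" if "i < n" "j < n" for i j
    using Q_vstar[OF f that(1)] Q_swap[OF vec_in_Gset[OF f that(1)] vec_in_Gset[OF f that(2)]]
    by simp
  then show ?thesis unfolding Rel_def by auto
qed

lemma generic_vstar:
  assumes "generic n f"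
  shows "generic n (vstar f)"
proof -
  have f: "vec_in G0set n f" "lin_indep_on (Suc n) (id_cons f)" "pairwise_Q_nonzero n f"
    using assms by (simp_all add: generic_iff)
  have "id_cons (vstar f) = (\<lambda>k. star (id_cons f k))"
    by (auto simp: id_cons_def vstar_def star_def fun_eq_iff)
  then have "lin_indep_on (Suc n) (id_cons (vstar f))"
    using lin_indep_on_star[OF f(2)] by simp
  moreover have "pairwise_Q_nonzero n (vstar f)"
    by (rule pairwise_Q_nonzero_scaled[OF f(3), where c = "-1"]) (simp_all add: Q_vstar[OF f(1)])
  ultimately show ?thesis unfolding generic_iff using vstar_G0set[OF f(1)] by simp
qed

lemma strongly_generic_vstar:
  assumes "strongly_generic n f"
  shows "strongly_generic n (vstar f)"
proof -
  have f: "vec_in G0set n f" "lin_indep_on n (\<lambda>k. evenpart (f k))" "pairwise_Q_nonzero n f"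
    using assms by (simp_all add: strongly_generic_iff)
  have "(\<lambda>k. evenpart (vstar f k)) = (\<lambda>k t. -1 * evenpart (f k) t)"
    by (auto simp: vstar_def star_def evenpart_def field_simps)
  then have "lin_indep_on n (\<lambda>k. evenpart (vstar f k))"
    using lin_indep_on_scale[OF f(2), of "-1"] by simp
  moreover have "pairwise_Q_nonzero n (vstar f)"
    by (rule pairwise_Q_nonzero_scaled[OF f(3), where c = "-1"]) (simp_all add: Q_vstar[OF f(1)])
  ultimately show ?thesis unfolding strongly_generic_iff using vstar_G0set[OF f(1)] by simp
qed

lemma vodot_G0set:
  assumes "vec_in G0set n f" "\<And>i. i < n \<Longrightarrow> g i \<in> Gset" "\<And>i. i < n \<Longrightarrow> integral I (g i) = 0"
  shows "vec_in G0set n (vodot g f)"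
  using assms by (simp add: vec_in_def G0set_def vodot_def odot_Gset integral_odot)

lemma id_cons_vodot: "id_cons (vodot g f) = (\<lambda>k. odot (id_cons g k) (id_cons f k))"
  by (auto simp: id_cons_def vodot_def odot_def fun_eq_iff)

lemma vodot_properties:
  assumes f: "vec_in G0set n f"
    and g: "\<And>i. i < n \<Longrightarrow> g i \<in> Gset" "\<And>i. i < n \<Longrightarrow> integral I (g i) = 0"
    and c: "0 < c" "\<And>i j. i < n \<Longrightarrow> j < n \<Longrightarrow> Q (vodot g f i) (vodot g f j) = c * Q (f i) (f j)"
    and evenparts: "lin_indep_on n (\<lambda>k. evenpart (f k)) \<Longrightarrow>
      lin_indep_on n (\<lambda>k. evenpart (vodot g f k))"
  shows "vec_in G0set n (vodot g f)" "Rel n (vodot g f) = Rel n f"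
    and "generic n f \<Longrightarrow> generic n (vodot g f)"
    and "strongly_generic n f \<Longrightarrow> strongly_generic n (vodot g f)"
proof -
  show v: "vec_in G0set n (vodot g f)" by (rule vodot_G0set[OF f g])
  show "Rel n (vodot g f) = Rel n f" by (rule Rel_scaled[OF c])
  have pairwise: "pairwise_Q_nonzero n (vodot g f)" if "pairwise_Q_nonzero n f"
    by (rule pairwise_Q_nonzero_scaled[OF that, where c = c]) (use c in auto)
  have "lin_indep_on (Suc n) (id_cons (vodot g f))" if "lin_indep_on (Suc n) (id_cons f)"
    unfolding id_cons_vodot by (rule lin_indep_on_odot[OF that id_cons_Gset[OF f]])
  then show "generic n f \<Longrightarrow> generic n (vodot g f)"
    unfolding generic_iff using v pairwise by blast
  show "strongly_generic n f \<Longrightarrow> strongly_generic n (vodot g f)"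
    unfolding strongly_generic_iff using v pairwise evenparts by blast
qed

lemma vodot_self_properties:
  assumes f: "vec_in G0set n f"
  shows "vec_in G0set n (vodot f f)" "Rel n (vodot f f) = Rel n f"
    and "generic n f \<Longrightarrow> generic n (vodot f f)"
    and "strongly_generic n f \<Longrightarrow> strongly_generic n (vodot f f)"
proof -
  have "Q (vodot f f i) (vodot f f j) = 1/2 * Q (f i) (f j)" if "i < n" "j < n" for i j
    using that by (simp add: vodot_def Q_odot vec_in_Gset[OF f])
  moreover have "lin_indep_on n (\<lambda>k. evenpart (vodot f f k))"
    if "lin_indep_on n (\<lambda>k. evenpart (f k))"
    unfolding vodot_def by (rule lin_indep_on_evenpart_odot_self[OF that vec_in_Gset[OF f]])
  ultimately show "vec_in G0set n (vodot f f)" "Rel n (vodot f f) = Rel n f"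
    and "generic n f \<Longrightarrow> generic n (vodot f f)"
    and "strongly_generic n f \<Longrightarrow> strongly_generic n (vodot f f)"
    using vodot_properties[OF f vec_in_Gset[OF f] vec_in_integral[OF f], where c = "1/2"] by simp_all
qed

lemma vodot_odd_properties:
  assumes f: "vec_in G0set n f" and g: "vec_in G00set n g"
  shows "vec_in G0set n (vodot g f)" "Rel n (vodot g f) = Rel n f"
    and "generic n f \<Longrightarrow> generic n (vodot g f)"
    and "strongly_generic n f \<Longrightarrow> strongly_generic n (vodot g f)"
proof -
  have odd: "\<And>i. i < n \<Longrightarrow> g i \<in> G00set" using g by (simp add: vec_in_def)
  then have gG: "\<And>i. i < n \<Longrightarrow> g i \<in> Gset" by (simp add: G00set_def)
  have "integral I (g i) = 0" if "i < n" for i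
    by (rule integral_odd) (use odd[OF that] in \<open>simp add: G00set_def\<close>)
  moreover have "Q (vodot g f i) (vodot g f j) = 1/4 * Q (f i) (f j)" if "i < n" "j < n" for i j
    using that by (simp add: vodot_def Q_odot vec_in_Gset[OF f] gG Q_odd odd)
  moreover have "lin_indep_on n (\<lambda>k. evenpart (vodot g f k))"
    if "lin_indep_on n (\<lambda>k. evenpart (f k))"
    unfolding vodot_def by (rule lin_indep_on_evenpart_odot_odd[OF that vec_in_Gset[OF f] odd])
  ultimately show "vec_in G0set n (vodot g f)" "Rel n (vodot g f) = Rel n f"
    and "generic n f \<Longrightarrow> generic n (vodot g f)"
    and "strongly_generic n f \<Longrightarrow> strongly_generic n (vodot g f)"
    using vodot_properties[OF f gG, where c = "1/4"] by simp_all
qed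

lemma rho_properties:
  assumes f: "vec_in G0set n f" and h: "h \<in> Gset"
  shows "vec_in Gset n (rho h f)" "Rel n (rho h f) = Rel n f"
proof -
  show "vec_in Gset n (rho h f)"
    by (simp add: vec_in_def rho_def comp_Gset vec_in_Gset[OF f] h)
  show "Rel n (rho h f) = Rel n f"
    by (rule Rel_scaled[of 1]) (simp_all add: rho_def Q_comp_right vec_in_Gset[OF f] h)
qed

lemma permutes_id_cons_shift:
  assumes \<pi>: "\<pi> permutes {..<n}"
  shows "(\<lambda>k. if k = 0 then 0 else Suc (\<pi> (k - 1))) permutes {..<Suc n}" (is "?\<sigma> \<pi> permutes _")
proof (rule bij_imp_permutes)
  have maps: "?\<sigma> p \<in> {..<Suc n} \<rightarrow> {..<Suc n}" if p: "p permutes {..<n}" for p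
  proof
    fix k :: nat assume "k \<in> {..<Suc n}"
    then show "?\<sigma> p k \<in> {..<Suc n}" using permutes_in_image[OF p, of "k - 1"] by auto
  qed
  show "bij_betw (?\<sigma> \<pi>) {..<Suc n} {..<Suc n}"
    by (rule bij_betwI[OF maps[OF \<pi>] maps[OF permutes_inv[OF \<pi>]]])
      (simp_all add: permutes_inverses[OF \<pi>])
  show "?\<sigma> \<pi> k = k" if "k \<notin> {..<Suc n}" for k
    using that permutes_not_in[OF \<pi>, of "k - 1"] by simp
qed

lemma perm_rel_iff:
  assumes "\<pi> permutes S"
  shows "(a, b) \<in> perm_rel \<pi> R \<longleftrightarrow> (inv \<pi> a, inv \<pi> b) \<in> R"
proof
  assume "(a, b) \<in> perm_rel \<pi> R"
  then show "(inv \<pi> a, inv \<pi> b) \<in> R"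
    unfolding perm_rel_def by (auto simp: permutes_inverses[OF assms])
next
  assume "(inv \<pi> a, inv \<pi> b) \<in> R"
  then have "(\<pi> (inv \<pi> a), \<pi> (inv \<pi> b)) \<in> perm_rel \<pi> R" unfolding perm_rel_def by blast
  then show "(a, b) \<in> perm_rel \<pi> R" by (simp add: permutes_inverses[OF assms])
qed

lemma vperm_properties:
  assumes f: "vec_in G0set n f" and \<pi>: "\<pi> permutes {..<n}"
  shows "vec_in G0set n (vperm \<pi> f)" "Rel n (vperm \<pi> f) = perm_rel \<pi> (Rel n f)"
    and "generic n f \<Longrightarrow> generic n (vperm \<pi> f)"
    and "strongly_generic n f \<Longrightarrow> strongly_generic n (vperm \<pi> f)"
proof -
  have inv_\<pi>: "inv \<pi> permutes {..<n}" by (rule permutes_inv[OF \<pi>])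
  have inv_lt: "inv \<pi> i < n \<longleftrightarrow> i < n" for i
    using permutes_in_image[OF inv_\<pi>] by simp
  show v: "vec_in G0set n (vperm \<pi> f)"
    using f inv_lt by (simp add: vec_in_def vperm_def)
  show "Rel n (vperm \<pi> f) = perm_rel \<pi> (Rel n f)"
  proof (rule set_eqI)
    fix x :: "nat \<times> nat"
    obtain a b where x: "x = (a, b)" by (cases x)
    show "x \<in> Rel n (vperm \<pi> f) \<longleftrightarrow> x \<in> perm_rel \<pi> (Rel n f)"
      unfolding x perm_rel_iff[OF \<pi>] by (simp add: Rel_def vperm_def inv_lt)
  qed
  have pairwise: "pairwise_Q_nonzero n (vperm \<pi> f)" if f_pw: "pairwise_Q_nonzero n f"
    unfolding pairwise_Q_nonzero_def vperm_def
  proof (intro allI impI)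
    fix i j assume "i < n" "j < n" "i \<noteq> j"
    then show "Q (f (inv \<pi> i)) (f (inv \<pi> j)) \<noteq> 0"
      using f_pw[unfolded pairwise_Q_nonzero_def, rule_format, of "inv \<pi> i" "inv \<pi> j"]
      by (simp add: inv_lt inj_eq[OF permutes_inj[OF inv_\<pi>]])
  qed
  have "id_cons (vperm \<pi> f) = id_cons f \<circ> (\<lambda>k. if k = 0 then 0 else Suc (inv \<pi> (k - 1)))"
    by (simp add: id_cons_def vperm_def fun_eq_iff)
  then have "lin_indep_on (Suc n) (id_cons (vperm \<pi> f))" if "lin_indep_on (Suc n) (id_cons f)"
    using lin_indep_on_permute[OF that permutes_id_cons_shift[OF inv_\<pi>]] by simp
  then show "generic n f \<Longrightarrow> generic n (vperm \<pi> f)"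
    unfolding generic_iff using v pairwise by blast
  have "(\<lambda>k. evenpart (vperm \<pi> f k)) = (\<lambda>k. evenpart (f k)) \<circ> inv \<pi>"
    by (simp add: vperm_def o_def)
  then have "lin_indep_on n (\<lambda>k. evenpart (vperm \<pi> f k))" if "lin_indep_on n (\<lambda>k. evenpart (f k))"
    using lin_indep_on_permute[OF that inv_\<pi>] by simp
  then show "strongly_generic n f \<Longrightarrow> strongly_generic n (vperm \<pi> f)"
    unfolding strongly_generic_iff using v pairwise by blast
qed

theorem proposition4p16:
  fixes n :: nat and f :: "nat \<Rightarrow> real \<Rightarrow> real"
  assumes "vec_in G0set n f"
  shows
   "(vec_in G0set n (vstar f) \<and> Rel n (vstar f) = (Rel n f)\<inverse>
      \<and> (generic n f \<longrightarrow> generic n (vstar f))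
      \<and> (strongly_generic n f \<longrightarrow> strongly_generic n (vstar f)))
    \<and> (vec_in G0set n (vodot f f) \<and> Rel n (vodot f f) = Rel n f
      \<and> (generic n f \<longrightarrow> generic n (vodot f f))
      \<and> (strongly_generic n f \<longrightarrow> strongly_generic n (vodot f f)))
    \<and> (\<forall>g. vec_in G00set n g \<longrightarrow>
        vec_in G0set n (vodot g f) \<and> Rel n (vodot g f) = Rel n f
      \<and> (generic n f \<longrightarrow> generic n (vodot g f))
      \<and> (strongly_generic n f \<longrightarrow> strongly_generic n (vodot g f)))
    \<and> (\<forall>h\<in>Gset. vec_in Gset n (rho h f) \<and> Rel n (rho h f) = Rel n f)
    \<and> (\<forall>\<pi>. \<pi> permutes {..<n} \<longrightarrow>
        vec_in G0set n (vperm \<pi> f) \<and> Rel n (vperm \<pi> f) = perm_rel \<pi> (Rel n f)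
      \<and> (generic n f \<longrightarrow> generic n (vperm \<pi> f))
      \<and> (strongly_generic n f \<longrightarrow> strongly_generic n (vperm \<pi> f)))"
  using assms
  by (simp add: vstar_G0set Rel_vstar generic_vstar strongly_generic_vstar vodot_self_properties
      vodot_odd_properties rho_properties vperm_properties)

end
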